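(* There exist absolute constants $C_1, C_2>0$ with the following property. Let $\Omega\subset\mathbb{R}^d$ be compact, let $\mu$ be a probability measure on $\Omega$, and let $X_N\subset\mathcal{C}(\Omega)$ be a linear subspace of (complex-valued) continuous functions which is $N$-dimensional as a subspace of $L_2(\Omega,\mu)$. Let $\{u_1,\dots,u_N\}$ be any orthonormal basis of $X_N$ in $L_2(\Omega,\mu)$ and put $w(\mathbf{x}):=(|u_1(\mathbf{x})|^2+\dots+|u_N(\mathbf{x})|^2)^{1/2}$. Then there exists a set of $m\le C_1N$ points $\xi^1,\dots,\xi^m\in\Omega$ such that for every $f\in X_N$ $$ \sup_{\mathbf{x}\in\Omega,\ w(\mathbf{x})>0}\frac{|f(\mathbf{x})|}{w(\mathbf{x})}\le C_2\max_{1\le j\le m}|f(\xi^j)|, $$ and, in particular, $$ \|f\|_\infty\le C_2\,\|w\|_\infty\,\max_{1\le j\le m}|f(\xi^j)|, $$ where $\|g\|_\infty=\max_{\mathbf{x}\in\Omega}|g(\mathbf{x})|$.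
   Context: $\mathcal{C}(\Omega)$ is the space of continuous functions on $\Omega$ with the uniform norm $\|f\|_\infty=\max_{\mathbf x\in\Omega}|f(\mathbf x)|$. $L_2(\Omega,\mu)$ has inner product $\langle f,g\rangle=\int_\Omega f\bar g\,d\mu$. The function $w$ does not depend on the choice of orthonormal basis. If $w(\mathbf x)=0$ then every $f\in X_N$ vanishes at $\mathbf x$. *)

theory Defs
  imports "HOL-Probability.Probability"
begin

text \<open>Points of R^d are represented as functions nat => real vanishing from index d on;
  the type nat => real carries the product topology, which on such finitely supported
  sets coincides with the Euclidean topology of R^d.\<close>

definition euclid_pts :: "nat \<Rightarrow> (nat \<Rightarrow> real) set" where
  "euclid_pts d = {x. \<forall>i\<ge>d. x i = 0}"

definition complex_fun_subspace :: "('a \<Rightarrow> complex) set \<Rightarrow> bool" where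
  "complex_fun_subspace X \<longleftrightarrow> (\<lambda>x. 0) \<in> X \<and> (\<forall>f\<in>X. \<forall>g\<in>X. (\<lambda>x. f x + g x) \<in> X)
     \<and> (\<forall>c. \<forall>f\<in>X. (\<lambda>x. c * f x) \<in> X)"

text \<open>Maximum of |f(xi^j)| over j < m (with the harmless value 0 when m = 0).\<close>
definition max_abs_pts :: "('a \<Rightarrow> complex) \<Rightarrow> (nat \<Rightarrow> 'a) \<Rightarrow> nat \<Rightarrow> real" where
  "max_abs_pts f \<xi> m = Max (insert 0 ((\<lambda>j. cmod (f (\<xi> j))) ` {..<m}))"

end

theory Submission
  imports Defs "Jordan_Normal_Form.Determinant"
begin

text \<open>Write \<open>f = \<Sum> c\<^sub>i u\<^sub>i\<close>. By Cauchy--Schwarz \<open>|f(x)|\<^sup>2 \<le> |c|\<^sup>2 w(x)\<^sup>2\<close>, so it suffices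
  to find \<open>m \<le> 8N\<close> points \<open>\<xi>\<^sub>j\<close> with \<open>\<Sum>\<^sub>j |f(\<xi>\<^sub>j)|\<^sup>2 \<ge> N |c|\<^sup>2\<close> for all \<open>c\<close>: then
  \<open>|c|\<^sup>2 \<le> 8 max\<^sub>j |f(\<xi>\<^sub>j)|\<^sup>2\<close>, and \<open>\<surd>8 \<le> 3\<close>.

  Such points come from the lower-barrier half of the Batson--Spielman--Srivastava sparsification
  argument. Let \<open>A\<^sub>k\<close> be the sum of \<open>u(\<xi>\<^sub>j) u(\<xi>\<^sub>j)\<^sup>*\<close> over \<open>j < k\<close>, where \<open>u = (u\<^sub>1, \<dots>, u\<^sub>N)\<close>.
  One keeps \<open>A\<^sub>k - (k/4 - N) I\<close> positive definite with inverse of trace at most \<open>1\<close>. To pass from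
  \<open>k\<close> to \<open>k + 1\<close> the barrier moves by \<open>1/4\<close> and one rank-one term \<open>u(x) u(x)\<^sup>*\<close> is added. By the
  Sherman--Morrison formula the new trace is governed by quadratic forms in \<open>u(x)\<close>, whose
  \<open>\<mu>\<close>-averages are traces since \<open>\<integral> u u\<^sup>* d\<mu> = I\<close>; hence a suitable \<open>x \<in> \<Omega>\<close> exists. After
  \<open>8N\<close> steps \<open>A\<^sub>8\<^sub>N \<ge> N I\<close>, which is the required sampling inequality.\<close>

section \<open>Complex matrices as index functions\<close>

text \<open>The size \<open>n\<close> is an explicit argument of every operation; entries with an index \<open>\<ge> n\<close>
  are ignored.\<close>

type_synonym cmat = "nat \<Rightarrow> nat \<Rightarrow> complex"
type_synonym cvec = "nat \<Rightarrow> complex"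

definition mmult :: "nat \<Rightarrow> cmat \<Rightarrow> cmat \<Rightarrow> cmat" where
  "mmult n A B = (\<lambda>i j. \<Sum>k<n. A i k * B k j)"

definition mvec :: "nat \<Rightarrow> cmat \<Rightarrow> cvec \<Rightarrow> cvec" where
  "mvec n A x = (\<lambda>i. \<Sum>j<n. A i j * x j)"

definition cinner :: "nat \<Rightarrow> cvec \<Rightarrow> cvec \<Rightarrow> complex" where
  "cinner n x y = (\<Sum>i<n. cnj (x i) * y i)"

definition sqnorm :: "nat \<Rightarrow> cvec \<Rightarrow> real" where
  "sqnorm n x = (\<Sum>i<n. (cmod (x i))\<^sup>2)"

definition id_mat :: cmat where
  "id_mat = (\<lambda>i j. if i = j then 1 else 0)"

definition basis_vec :: "nat \<Rightarrow> cvec" where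
  "basis_vec i = (\<lambda>k. if k = i then 1 else 0)"

definition mtrace :: "nat \<Rightarrow> cmat \<Rightarrow> complex" where
  "mtrace n A = (\<Sum>i<n. A i i)"

definition shift_diag :: "cmat \<Rightarrow> real \<Rightarrow> cmat" where
  "shift_diag M c = (\<lambda>i j. M i j - of_real c * id_mat i j)"

definition qform :: "nat \<Rightarrow> cmat \<Rightarrow> cvec \<Rightarrow> complex" where
  "qform n A x = cinner n x (mvec n A x)"

definition hermitian :: "nat \<Rightarrow> cmat \<Rightarrow> bool" where
  "hermitian n A \<longleftrightarrow> (\<forall>i<n. \<forall>j<n. A j i = cnj (A i j))"

definition pos_semidef :: "nat \<Rightarrow> cmat \<Rightarrow> bool" where
  "pos_semidef n A \<longleftrightarrow> hermitian n A \<and> (\<forall>x. 0 \<le> Re (qform n A x))"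

definition pos_def :: "nat \<Rightarrow> cmat \<Rightarrow> bool" where
  "pos_def n A \<longleftrightarrow> hermitian n A \<and> (\<forall>x. (\<exists>i<n. x i \<noteq> 0) \<longrightarrow> 0 < Re (qform n A x))"

definition is_inverse :: "nat \<Rightarrow> cmat \<Rightarrow> cmat \<Rightarrow> bool" where
  "is_inverse n A R \<longleftrightarrow>
     (\<forall>i<n. \<forall>j<n. mmult n A R i j = id_mat i j \<and> mmult n R A i j = id_mat i j)"

lemma sum_id_mat_right: "k < n \<Longrightarrow> (\<Sum>l<n. id_mat k l * f l) = f k"
  by (simp add: id_mat_def if_distrib[where f="\<lambda>a. a * f _" for f] cong: if_cong)

lemma sum_id_mat_left: "k < n \<Longrightarrow> (\<Sum>l<n. f l * id_mat l k) = f k"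
  by (simp add: id_mat_def if_distrib[where f="\<lambda>a. _ * a"] cong: if_cong)

lemma mmult_apply: "mmult n A B i j = (\<Sum>k<n. A i k * B k j)"
  by (simp add: mmult_def)

lemma mvec_mmult: "mvec n (mmult n A B) x = mvec n A (mvec n B x)"
proof
  fix i
  have "(\<Sum>j<n. (\<Sum>k<n. A i k * B k j) * x j) = (\<Sum>j<n. \<Sum>k<n. A i k * (B k j * x j))"
    by (simp add: sum_distrib_right mult.assoc)
  also have "\<dots> = (\<Sum>k<n. \<Sum>j<n. A i k * (B k j * x j))" by (rule sum.swap)
  also have "\<dots> = (\<Sum>k<n. A i k * (\<Sum>j<n. B k j * x j))" by (simp add: sum_distrib_left)
  finally show "mvec n (mmult n A B) x i = mvec n A (mvec n B x) i"
    unfolding mvec_def mmult_def .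
qed

lemma mmult_assoc: "mmult n (mmult n A B) C = mmult n A (mmult n B C)"
proof (intro ext)
  fix i j
  have "(\<Sum>l<n. (\<Sum>k<n. A i k * B k l) * C l j) = (\<Sum>l<n. \<Sum>k<n. A i k * (B k l * C l j))"
    by (simp add: sum_distrib_right mult.assoc)
  also have "\<dots> = (\<Sum>k<n. \<Sum>l<n. A i k * (B k l * C l j))" by (rule sum.swap)
  also have "\<dots> = (\<Sum>k<n. A i k * (\<Sum>l<n. B k l * C l j))" by (simp add: sum_distrib_left)
  finally show "mmult n (mmult n A B) C i j = mmult n A (mmult n B C) i j"
    unfolding mmult_def .
qed

lemma mtrace_mmult_commute: "mtrace n (mmult n A B) = mtrace n (mmult n B A)"
proof -
  have "mtrace n (mmult n A B) = (\<Sum>i<n. \<Sum>k<n. A i k * B k i)" by (simp add: mtrace_def mmult_def)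
  also have "\<dots> = (\<Sum>k<n. \<Sum>i<n. A i k * B k i)" by (rule sum.swap)
  also have "\<dots> = mtrace n (mmult n B A)" by (simp add: mtrace_def mmult_def mult.commute)
  finally show ?thesis .
qed

lemma cinner_commute: "cinner n x y = cnj (cinner n y x)"
  by (simp add: cinner_def mult.commute)

lemma cinner_cong:
  "(\<And>i. i < n \<Longrightarrow> x i = x' i) \<Longrightarrow> (\<And>i. i < n \<Longrightarrow> y i = y' i) \<Longrightarrow> cinner n x y = cinner n x' y'"
  by (simp add: cinner_def)

lemma cinner_add_left: "cinner n (\<lambda>i. x i + t * y i) z = cinner n x z + cnj t * cinner n y z"
  by (simp add: cinner_def distrib_right sum.distrib sum_distrib_left mult.assoc)

lemma cinner_add_right: "cinner n z (\<lambda>i. x i + t * y i) = cinner n z x + t * cinner n z y"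
  by (simp add: cinner_def distrib_left sum.distrib sum_distrib_left mult.left_commute)

lemma cinner_self: "cinner n x x = of_real (sqnorm n x)"
  unfolding cinner_def sqnorm_def of_real_sum
  by (rule sum.cong) (simp_all add: mult.commute complex_norm_square[symmetric] del: of_real_power)

lemma cinner_basis_vec: "i < n \<Longrightarrow> cinner n (basis_vec i) z = z i"
  by (simp add: cinner_def basis_vec_def if_distrib[where f=cnj]
      if_distrib[where f="\<lambda>a. a * z _" for z] cong: if_cong)

lemma mvec_basis_vec: "j < n \<Longrightarrow> mvec n A (basis_vec j) = (\<lambda>k. A k j)"
  by (simp add: mvec_def basis_vec_def if_distrib[where f="\<lambda>a. _ * a"] cong: if_cong)

lemma mvec_add: "mvec n A (\<lambda>i. x i + t * y i) = (\<lambda>i. mvec n A x i + t * mvec n A y i)"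
  by (simp add: mvec_def distrib_left sum.distrib sum_distrib_left mult.left_commute)

lemma qform_basis_vec: "i < n \<Longrightarrow> qform n A (basis_vec i) = A i i"
  by (simp add: qform_def mvec_basis_vec cinner_basis_vec)

lemma qform_zero: "(\<And>i. i < n \<Longrightarrow> x i = 0) \<Longrightarrow> qform n A x = 0"
  by (simp add: qform_def cinner_def)

lemma sqnorm_nonneg: "0 \<le> sqnorm n x"
  by (simp add: sqnorm_def sum_nonneg)

lemma sqnorm_pos: "\<exists>i<n. x i \<noteq> 0 \<Longrightarrow> 0 < sqnorm n x"
  unfolding sqnorm_def by (elim exE conjE, rule sum_pos2[of "{..<n}"]) auto

section \<open>Hermitian and positive definite matrices\<close>

lemma hermitianD: "hermitian n A \<Longrightarrow> i < n \<Longrightarrow> j < n \<Longrightarrow> A j i = cnj (A i j)"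
  unfolding hermitian_def by blast

lemma hermitian_adjoint:
  assumes "hermitian n A"
  shows "cinner n x (mvec n A y) = cinner n (mvec n A x) y"
proof -
  have "cinner n x (mvec n A y) = (\<Sum>i<n. \<Sum>j<n. cnj (x i) * (A i j * y j))"
    by (simp add: cinner_def mvec_def sum_distrib_left)
  also have "\<dots> = (\<Sum>j<n. \<Sum>i<n. cnj (x i) * (A i j * y j))" by (rule sum.swap)
  also have "\<dots> = (\<Sum>j<n. \<Sum>i<n. cnj (A j i * x i) * y j)"
  proof (intro sum.cong refl)
    fix i j assume "i \<in> {..<n}" "j \<in> {..<n}"
    then have "A i j = cnj (A j i)" using hermitianD[OF assms, of j i] by simp
    then show "cnj (x i) * (A i j * y j) = cnj (A j i * x i) * y j" by simp
  qed
  also have "\<dots> = cinner n (mvec n A x) y"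
    by (simp add: cinner_def mvec_def sum_distrib_right)
  finally show ?thesis .
qed

lemma hermitian_qform_real:
  assumes "hermitian n A"
  shows "qform n A x = of_real (Re (qform n A x))"
proof -
  have "qform n A x = cnj (qform n A x)"
    unfolding qform_def using hermitian_adjoint[OF assms, of x x] cinner_commute[of n "mvec n A x" x]
    by simp
  then show ?thesis by (metis Reals_cnj_iff of_real_Re)
qed

lemma hermitian_qform_add:
  assumes "hermitian n A"
  shows "qform n A (\<lambda>i. x i + t * y i) = qform n A x + t * cinner n x (mvec n A y)
     + cnj t * cnj (cinner n x (mvec n A y)) + cnj t * t * qform n A y"
proof -
  have "cinner n y (mvec n A x) = cnj (cinner n x (mvec n A y))"
    using hermitian_adjoint[OF assms, of y x] cinner_commute[of n "mvec n A y" x] by simp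
  then show ?thesis
    unfolding qform_def mvec_add cinner_add_left cinner_add_right by (simp add: algebra_simps)
qed

lemma hermitian_shift_diag:
  assumes "hermitian n A"
  shows "hermitian n (shift_diag A c)"
  unfolding hermitian_def
proof (intro allI impI)
  fix i j assume "i < n" "j < n"
  then have "A j i = cnj (A i j)" by (rule hermitianD[OF assms])
  then show "shift_diag A c j i = cnj (shift_diag A c i j)" by (simp add: shift_diag_def id_mat_def)
qed

lemma mvec_shift_diag:
  assumes "i < n"
  shows "mvec n (shift_diag A c) x i = mvec n A x i + (- of_real c) * x i"
proof -
  have "mvec n (shift_diag A c) x i = mvec n A x i - of_real c * (\<Sum>j<n. id_mat i j * x j)"
    by (simp add: mvec_def shift_diag_def left_diff_distrib sum_subtractf sum_distrib_left mult.assoc)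
  then show ?thesis using sum_id_mat_right[OF assms] by simp
qed

lemma qform_shift_diag: "qform n (shift_diag A c) x = qform n A x - of_real c * of_real (sqnorm n x)"
proof -
  have "qform n (shift_diag A c) x = cinner n x (\<lambda>i. mvec n A x i + (- of_real c) * x i)"
    unfolding qform_def using mvec_shift_diag by (intro cinner_cong) auto
  then show ?thesis
    unfolding cinner_add_right cinner_self qform_def by simp
qed

lemma pos_semidefD: "pos_semidef n A \<Longrightarrow> 0 \<le> Re (qform n A x)"
  and pos_semidef_hermitian: "pos_semidef n A \<Longrightarrow> hermitian n A"
  unfolding pos_semidef_def by blast+

lemma pos_defD: "pos_def n A \<Longrightarrow> \<exists>i<n. x i \<noteq> 0 \<Longrightarrow> 0 < Re (qform n A x)"
  and pos_def_hermitian: "pos_def n A \<Longrightarrow> hermitian n A"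
  unfolding pos_def_def by blast+

lemma pos_def_imp_pos_semidef:
  assumes "pos_def n A"
  shows "pos_semidef n A"
proof -
  have "0 \<le> Re (qform n A x)" for x
    using pos_defD[OF assms, of x] qform_zero[of n x A] by (cases "\<exists>i<n. x i \<noteq> 0") auto
  then show ?thesis using pos_def_hermitian[OF assms] by (simp add: pos_semidef_def)
qed

lemma nonneg_quadratic_imp_le_mult:
  fixes a b k :: real
  assumes h: "\<And>s. 0 \<le> a - 2 * s * k + s\<^sup>2 * k * b" and "0 \<le> b" "0 \<le> k"
  shows "k \<le> a * b"
proof (cases "b > 0")
  case True
  have "0 \<le> a - 2 * (1 / b) * k + (1 / b)\<^sup>2 * k * b" by (rule h)
  with True show ?thesis by (simp add: field_simps power2_eq_square)
next
  case False
  with assms have "b = 0" by simp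
  show ?thesis
  proof (rule ccontr)
    assume "\<not> k \<le> a * b"
    with \<open>b = 0\<close> have "k > 0" by simp
    have "0 \<le> a - 2 * ((a + 1) / (2 * k)) * k + ((a + 1) / (2 * k))\<^sup>2 * k * b" by (rule h)
    with \<open>k > 0\<close> \<open>b = 0\<close> show False by (simp add: field_simps)
  qed
qed

lemma pos_semidef_cauchy_schwarz:
  assumes P: "pos_semidef n P"
  shows "(cmod (cinner n x (mvec n P y)))\<^sup>2 \<le> Re (qform n P x) * Re (qform n P y)"
proof -
  define c where "c = cinner n x (mvec n P y)"
  define k where "k = (cmod c)\<^sup>2"
  have ck: "c * cnj c = of_real k"
    unfolding k_def by (simp add: complex_norm_square[symmetric] del: of_real_power)
  have "0 \<le> Re (qform n P x) - 2 * s * k + s\<^sup>2 * k * Re (qform n P y)" for s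
  proof -
    have "qform n P (\<lambda>i. x i + (- of_real s * cnj c) * y i)
        = qform n P x - of_real (2 * s * k) + of_real (s\<^sup>2 * k) * qform n P y"
      unfolding hermitian_qform_add[OF pos_semidef_hermitian[OF P]] c_def[symmetric]
      by (simp add: algebra_simps power2_eq_square flip: ck)
    moreover have "0 \<le> Re (qform n P (\<lambda>i. x i + (- of_real s * cnj c) * y i))"
      using P by (rule pos_semidefD)
    ultimately show ?thesis by simp
  qed
  moreover have "0 \<le> Re (qform n P y)" using P by (rule pos_semidefD)
  ultimately show ?thesis
    unfolding c_def[symmetric] k_def[symmetric] by (intro nonneg_quadratic_imp_le_mult) (auto simp: k_def)
qed

lemma pos_semidef_diag_nonneg: "pos_semidef n P \<Longrightarrow> i < n \<Longrightarrow> 0 \<le> Re (P i i)"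
  using qform_basis_vec[of i n P] pos_semidefD[of n P "basis_vec i"] by simp

lemma pos_semidef_entry_bound:
  assumes "pos_semidef n P" "i < n" "j < n"
  shows "(cmod (P i j))\<^sup>2 \<le> Re (P i i) * Re (P j j)"
proof -
  have "cinner n (basis_vec i) (mvec n P (basis_vec j)) = P i j"
    using assms(2,3) by (simp add: mvec_basis_vec cinner_basis_vec)
  then show ?thesis
    using pos_semidef_cauchy_schwarz[OF assms(1), of "basis_vec i" "basis_vec j"]
    by (simp add: qform_basis_vec assms(2,3))
qed

lemma pos_semidef_trace_nonneg: "pos_semidef n P \<Longrightarrow> 0 \<le> Re (mtrace n P)"
  unfolding mtrace_def Re_sum by (rule sum_nonneg) (simp add: pos_semidef_diag_nonneg)

lemma trace_nonneg_of_qform_nonneg: "(\<And>x. 0 \<le> Re (qform n P x)) \<Longrightarrow> 0 \<le> Re (mtrace n P)"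
  unfolding mtrace_def Re_sum by (rule sum_nonneg) (metis qform_basis_vec lessThan_iff)

lemma le_mean_of_sq_le_mult:
  fixes p A B :: real
  assumes "0 \<le> A" "0 \<le> B" "p\<^sup>2 \<le> A * B"
  shows "p \<le> (A + B) / 2"
  using real_le_rsqrt[OF assms(3)] arith_geo_mean_sqrt[OF assms(1,2)] by linarith

lemma sum_symmetrized_product:
  fixes a d :: "nat \<Rightarrow> real"
  shows "(\<Sum>i<n. \<Sum>j<n. (a i * d j + a j * d i) / 2) = (\<Sum>i<n. a i) * (\<Sum>j<n. d j)"
proof -
  have "(\<Sum>i<n. \<Sum>j<n. (a i * d j + a j * d i) / 2)
      = ((\<Sum>i<n. \<Sum>j<n. a i * d j) + (\<Sum>i<n. \<Sum>j<n. a j * d i)) / 2"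
    by (simp add: sum.distrib add_divide_distrib sum_divide_distrib)
  also have "(\<Sum>i<n. \<Sum>j<n. a j * d i) = (\<Sum>i<n. \<Sum>j<n. a i * d j)" by (rule sum.swap)
  finally show ?thesis by (simp add: sum_product)
qed

lemma pos_semidef_qform_le_trace:
  assumes P: "pos_semidef n P"
  shows "Re (qform n P x) \<le> Re (mtrace n P) * sqnorm n x"
proof -
  define a where "a i = (cmod (x i))\<^sup>2" for i
  define d where "d i = Re (P i i)" for i
  have a0: "0 \<le> a i" and d0: "i < n \<Longrightarrow> 0 \<le> d i" for i
    using pos_semidef_diag_nonneg[OF P] by (auto simp: a_def d_def)
  have "Re (qform n P x) = (\<Sum>i<n. \<Sum>j<n. Re (cnj (x i) * (P i j * x j)))"
    by (simp add: qform_def cinner_def mvec_def sum_distrib_left)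
  also have "\<dots> \<le> (\<Sum>i<n. \<Sum>j<n. (a i * d j + a j * d i) / 2)"
  proof (intro sum_mono)
    fix i j assume "i \<in> {..<n}" "j \<in> {..<n}"
    then have i: "i < n" and j: "j < n" by auto
    have "Re (cnj (x i) * (P i j * x j)) \<le> cmod (cnj (x i) * (P i j * x j))"
      by (rule complex_Re_le_cmod)
    also have "\<dots> = cmod (x i) * cmod (P i j) * cmod (x j)" by (simp add: norm_mult)
    also have "\<dots> \<le> (a i * d j + a j * d i) / 2"
    proof (rule le_mean_of_sq_le_mult)
      have "(cmod (x i) * cmod (P i j) * cmod (x j))\<^sup>2 = (a i * a j) * (cmod (P i j))\<^sup>2"
        by (simp add: a_def power_mult_distrib)
      also have "\<dots> \<le> (a i * a j) * (d i * d j)"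
        using pos_semidef_entry_bound[OF P i j] a0 by (intro mult_left_mono) (auto simp: d_def)
      finally show "(cmod (x i) * cmod (P i j) * cmod (x j))\<^sup>2 \<le> a i * d j * (a j * d i)"
        by (simp add: ac_simps)
    qed (use a0 d0 i j in auto)
    finally show "Re (cnj (x i) * (P i j * x j)) \<le> (a i * d j + a j * d i) / 2" .
  qed
  also have "\<dots> = (\<Sum>i<n. a i) * (\<Sum>j<n. d j)" by (rule sum_symmetrized_product)
  also have "\<dots> = Re (mtrace n P) * sqnorm n x"
    by (simp add: a_def d_def sqnorm_def mtrace_def mult.commute)
  finally show ?thesis .
qed

lemma pos_semidef_trace_mmult_le:
  assumes R: "pos_semidef n R" and S: "pos_semidef n S"
  shows "Re (mtrace n (mmult n R S)) \<le> Re (mtrace n R) * Re (mtrace n S)"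
proof -
  define a where "a i = Re (R i i)" for i
  define d where "d i = Re (S i i)" for i
  have a0: "i < n \<Longrightarrow> 0 \<le> a i" and d0: "i < n \<Longrightarrow> 0 \<le> d i" for i
    using pos_semidef_diag_nonneg[OF R] pos_semidef_diag_nonneg[OF S] by (auto simp: a_def d_def)
  have "Re (mtrace n (mmult n R S)) = (\<Sum>i<n. \<Sum>k<n. Re (R i k * S k i))"
    by (simp add: mtrace_def mmult_def)
  also have "\<dots> \<le> (\<Sum>i<n. \<Sum>k<n. (a i * d k + a k * d i) / 2)"
  proof (intro sum_mono)
    fix i k assume "i \<in> {..<n}" "k \<in> {..<n}"
    then have i: "i < n" and k: "k < n" by auto
    have "Re (R i k * S k i) \<le> cmod (R i k * S k i)" by (rule complex_Re_le_cmod)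
    also have "\<dots> = cmod (R i k) * cmod (S k i)" by (simp add: norm_mult)
    also have "\<dots> \<le> (a i * d k + a k * d i) / 2"
    proof (rule le_mean_of_sq_le_mult)
      have "(cmod (R i k) * cmod (S k i))\<^sup>2 = (cmod (R i k))\<^sup>2 * (cmod (S k i))\<^sup>2"
        by (simp add: power_mult_distrib)
      also have "\<dots> \<le> (a i * a k) * (d k * d i)"
        using pos_semidef_entry_bound[OF R i k] pos_semidef_entry_bound[OF S k i] a0 d0 i k
        by (intro mult_mono) (auto simp: a_def d_def)
      finally show "(cmod (R i k) * cmod (S k i))\<^sup>2 \<le> a i * d k * (a k * d i)"
        by (simp add: ac_simps)
    qed (use a0 d0 i k in auto)
    finally show "Re (R i k * S k i) \<le> (a i * d k + a k * d i) / 2" .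
  qed
  also have "\<dots> = (\<Sum>i<n. a i) * (\<Sum>j<n. d j)" by (rule sum_symmetrized_product)
  also have "\<dots> = Re (mtrace n R) * Re (mtrace n S)" by (simp add: a_def d_def mtrace_def)
  finally show ?thesis .
qed

lemma hermitian_trace_square_nonneg:
  assumes "hermitian n A"
  shows "0 \<le> Re (mtrace n (mmult n A A))"
proof -
  have "Re (mtrace n (mmult n A A)) = (\<Sum>i<n. \<Sum>k<n. (cmod (A i k))\<^sup>2)"
    unfolding mtrace_def mmult_def Re_sum
  proof (intro sum.cong refl)
    fix i k assume "i \<in> {..<n}" "k \<in> {..<n}"
    then have "A k i = cnj (A i k)" using hermitianD[OF assms, of i k] by simp
    then show "Re (A i k * A k i) = (cmod (A i k))\<^sup>2"
      by (simp add: complex_norm_square[symmetric] del: of_real_power)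
  qed
  then show ?thesis by (simp add: sum_nonneg)
qed

lemma qform_sandwich:
  "hermitian n A \<Longrightarrow> qform n (mmult n A (mmult n B A)) x = qform n B (mvec n A x)"
  unfolding qform_def mvec_mmult by (rule hermitian_adjoint)

section \<open>Inverses\<close>

lemma is_inverse_commute: "is_inverse n A R \<longleftrightarrow> is_inverse n R A"
  unfolding is_inverse_def by blast

lemma is_inverse_mvec:
  assumes "is_inverse n A R" "i < n"
  shows "mvec n A (mvec n R x) i = x i"
proof -
  have "mvec n A (mvec n R x) i = mvec n (mmult n A R) x i" by (simp only: mvec_mmult)
  also have "\<dots> = (\<Sum>j<n. mmult n A R i j * x j)" by (simp only: mvec_def)
  also have "\<dots> = (\<Sum>j<n. id_mat i j * x j)"
    using assms unfolding is_inverse_def by (intro sum.cong refl) auto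
  also have "\<dots> = x i" using assms(2) by (rule sum_id_mat_right)
  finally show ?thesis .
qed

lemma is_inverse_adjoint:
  assumes H: "hermitian n A" and I: "is_inverse n A R"
  shows "cinner n x (mvec n R y) = cinner n (mvec n R x) y"
proof -
  have "cinner n x (mvec n R y) = cinner n (mvec n A (mvec n R x)) (mvec n R y)"
    using is_inverse_mvec[OF I] by (intro cinner_cong) auto
  also have "\<dots> = cinner n (mvec n R x) (mvec n A (mvec n R y))"
    using hermitian_adjoint[OF H] by simp
  also have "\<dots> = cinner n (mvec n R x) y"
    using is_inverse_mvec[OF I] by (intro cinner_cong) auto
  finally show ?thesis .
qed

lemma is_inverse_hermitian:
  assumes H: "hermitian n A" and I: "is_inverse n A R"
  shows "hermitian n R"
  unfolding hermitian_def
proof (intro allI impI)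
  fix i j assume i: "i < n" and j: "j < n"
  have "R j i = cinner n (basis_vec j) (mvec n R (basis_vec i))"
    using i j by (simp add: mvec_basis_vec cinner_basis_vec)
  also have "\<dots> = cinner n (mvec n R (basis_vec j)) (basis_vec i)" by (rule is_inverse_adjoint[OF H I])
  also have "\<dots> = cnj (R i j)"
    using i j by (subst cinner_commute) (simp add: mvec_basis_vec cinner_basis_vec)
  finally show "R j i = cnj (R i j)" .
qed

lemma is_inverse_pos_semidef:
  assumes P: "pos_def n A" and I: "is_inverse n A R"
  shows "pos_semidef n R"
proof -
  have H: "hermitian n A" using P by (rule pos_def_hermitian)
  have "qform n R x = qform n A (mvec n R x)" for x
  proof -
    have "qform n R x = cinner n (mvec n A (mvec n R x)) (mvec n R x)"
      unfolding qform_def using is_inverse_mvec[OF I] by (intro cinner_cong) auto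
    also have "\<dots> = qform n A (mvec n R x)"
      unfolding qform_def by (rule hermitian_adjoint[OF H, symmetric])
    finally show ?thesis .
  qed
  then show ?thesis
    using pos_semidefD[OF pos_def_imp_pos_semidef[OF P]] is_inverse_hermitian[OF H I]
    by (simp add: pos_semidef_def)
qed

lemma pos_def_det_nonzero:
  assumes P: "pos_def n A"
  shows "Determinant.det (mat n n (\<lambda>(i, j). A i j)) \<noteq> 0"
proof
  assume "Determinant.det (mat n n (\<lambda>(i, j). A i j)) = 0"
  then obtain v where v: "v \<in> carrier_vec n" "v \<noteq> 0\<^sub>v n" "mat n n (\<lambda>(i, j). A i j) *\<^sub>v v = 0\<^sub>v n"
    using det_0_iff_vec_prod_zero_field[of "mat n n (\<lambda>(i, j). A i j)" n] by auto
  define x where "x i = v $ i" for i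
  have "\<exists>i<n. x i \<noteq> 0"
  proof (rule ccontr)
    assume "\<not> (\<exists>i<n. x i \<noteq> 0)"
    then have "v = 0\<^sub>v n" using v(1) by (intro eq_vecI) (auto simp: x_def)
    with v(2) show False by simp
  qed
  then have "0 < Re (qform n A x)" by (rule pos_defD[OF P])
  moreover have "mvec n A x i = 0" if "i < n" for i
  proof -
    have "(mat n n (\<lambda>(i, j). A i j) *\<^sub>v v) $ i = 0" using v(3) that by simp
    then show ?thesis using that v(1) by (simp add: mvec_def x_def scalar_prod_def atLeast0LessThan)
  qed
  ultimately show False by (simp add: qform_def cinner_def)
qed

lemma pos_def_has_inverse:
  assumes P: "pos_def n A"
  obtains R where "is_inverse n A R"
proof -
  define A' :: "complex mat" where "A' = mat n n (\<lambda>(i, j). A i j)"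
  have A': "A' \<in> carrier_mat n n" by (simp add: A'_def)
  then obtain R' where R': "R' \<in> carrier_mat n n" "R' * A' = 1\<^sub>m n" "A' * R' = 1\<^sub>m n"
    using det_non_zero_imp_unit[OF A' pos_def_det_nonzero[OF P, folded A'_def], of "()"]
    unfolding Units_def ring_mat_def by auto
  have "is_inverse n A (\<lambda>i j. R' $$ (i, j))"
    unfolding is_inverse_def
  proof (intro allI impI conjI)
    fix i j assume i: "i < n" and j: "j < n"
    have "(A' * R') $$ (i, j) = mmult n A (\<lambda>i j. R' $$ (i, j)) i j"
      using i j A' R'(1) by (simp add: A'_def mmult_def scalar_prod_def atLeast0LessThan)
    then show "mmult n A (\<lambda>i j. R' $$ (i, j)) i j = id_mat i j"
      using R'(3) i j by (simp add: id_mat_def)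
    have "(R' * A') $$ (i, j) = mmult n (\<lambda>i j. R' $$ (i, j)) A i j"
      using i j A' R'(1) by (simp add: A'_def mmult_def scalar_prod_def atLeast0LessThan)
    then show "mmult n (\<lambda>i j. R' $$ (i, j)) A i j = id_mat i j"
      using R'(2) i j by (simp add: id_mat_def)
  qed
  then show ?thesis by (rule that)
qed

text \<open>The eigenvalues of \<open>R = A\<^sup>-\<^sup>1\<close> are at most \<open>tr R \<le> 1\<close>, so \<open>A \<ge> I\<close>. Without eigenvalues:
  \<open>|x|\<^sup>4 = |\<langle>x, R A x\<rangle>|\<^sup>2 \<le> \<langle>x, R x\<rangle> \<langle>A x, R A x\<rangle> \<le> tr R |x|\<^sup>2 \<langle>x, A x\<rangle>\<close> by Cauchy--Schwarz.\<close>

lemma sqnorm_le_qform_if_trace_inverse_le_1: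
  assumes P: "pos_def n A" and I: "is_inverse n A R" and t: "Re (mtrace n R) \<le> 1"
  shows "sqnorm n x \<le> Re (qform n A x)"
proof -
  have PR: "pos_semidef n R" by (rule is_inverse_pos_semidef[OF P I])
  have qA: "0 \<le> Re (qform n A x)" using pos_semidefD[OF pos_def_imp_pos_semidef[OF P]] .
  have e1: "cinner n x x = cinner n x (mvec n R (mvec n A x))"
    using is_inverse_mvec[OF is_inverse_commute[THEN iffD1, OF I]] by (intro cinner_cong) auto
  have e2: "qform n R (mvec n A x) = cnj (qform n A x)"
  proof -
    have "qform n R (mvec n A x) = cinner n (mvec n A x) x"
      unfolding qform_def using is_inverse_mvec[OF is_inverse_commute[THEN iffD1, OF I]]
      by (intro cinner_cong) auto
    also have "\<dots> = cnj (qform n A x)" unfolding qform_def by (rule cinner_commute)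
    finally show ?thesis .
  qed
  have "(sqnorm n x)\<^sup>2 = (cmod (cinner n x x))\<^sup>2" by (simp add: cinner_self sqnorm_nonneg)
  also have "\<dots> \<le> Re (qform n R x) * Re (qform n R (mvec n A x))"
    unfolding e1 by (rule pos_semidef_cauchy_schwarz[OF PR])
  also have "\<dots> = Re (qform n R x) * Re (qform n A x)" by (simp add: e2)
  also have "\<dots> \<le> (Re (mtrace n R) * sqnorm n x) * Re (qform n A x)"
    by (intro mult_right_mono pos_semidef_qform_le_trace[OF PR] qA)
  also have "\<dots> \<le> sqnorm n x * Re (qform n A x)"
    using t sqnorm_nonneg[of n x] pos_semidef_trace_nonneg[OF PR] qA
    by (intro mult_right_mono) (simp_all add: mult_left_le_one_le)
  finally have "sqnorm n x * sqnorm n x \<le> sqnorm n x * Re (qform n A x)"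
    by (simp add: power2_eq_square)
  then show ?thesis using sqnorm_nonneg[of n x] qA
    by (cases "sqnorm n x = 0") (simp_all add: mult_le_cancel_left_pos)
qed

lemma pos_def_shift_diag_if_trace_inverse_le_1:
  assumes P: "pos_def n A" and I: "is_inverse n A R" and t: "Re (mtrace n R) \<le> 1" and "c < 1"
  shows "pos_def n (shift_diag A c)"
  unfolding pos_def_def
proof (intro conjI allI impI)
  show "hermitian n (shift_diag A c)" by (rule hermitian_shift_diag[OF pos_def_hermitian[OF P]])
  fix x :: cvec assume "\<exists>i<n. x i \<noteq> 0"
  then have "c * sqnorm n x < sqnorm n x"
    using \<open>c < 1\<close> by (simp add: sqnorm_pos)
  moreover have "sqnorm n x \<le> Re (qform n A x)" by (rule sqnorm_le_qform_if_trace_inverse_le_1[OF P I t])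
  ultimately show "0 < Re (qform n (shift_diag A c) x)" by (simp add: qform_shift_diag)
qed

lemma resolvent_identity:
  assumes I: "is_inverse n A R" and I': "is_inverse n (shift_diag A c) R'"
    and i: "i < n" and j: "j < n"
  shows "R' i j - R i j = of_real c * mmult n R' R i j"
proof -
  have a: "mmult n R' (mmult n A R) i j = R' i j"
  proof -
    have "mmult n R' (mmult n A R) i j = (\<Sum>k<n. R' i k * id_mat k j)"
      using I j unfolding is_inverse_def mmult_def[of n R'] by (intro sum.cong refl) auto
    also have "\<dots> = R' i j" using j by (rule sum_id_mat_left)
    finally show ?thesis .
  qed
  have b: "mmult n R' (mmult n (shift_diag A c) R) i j = R i j"
  proof -
    have "mmult n R' (mmult n (shift_diag A c) R) i j = mmult n (mmult n R' (shift_diag A c)) R i j"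
      by (simp only: mmult_assoc)
    also have "\<dots> = (\<Sum>k<n. mmult n R' (shift_diag A c) i k * R k j)" by (rule mmult_apply)
    also have "\<dots> = (\<Sum>k<n. id_mat i k * R k j)"
      using I' i unfolding is_inverse_def by (intro sum.cong refl) auto
    also have "\<dots> = R i j" using i by (rule sum_id_mat_right)
    finally show ?thesis .
  qed
  have d: "mmult n A R k j - mmult n (shift_diag A c) R k j = of_real c * R k j" if k: "k < n" for k
  proof -
    have "mmult n A R k j - mmult n (shift_diag A c) R k j = of_real c * (\<Sum>l<n. id_mat k l * R l j)"
      by (simp add: mmult_def shift_diag_def sum_subtractf[symmetric] algebra_simps sum_distrib_left)
    then show ?thesis using sum_id_mat_right[OF k, of "\<lambda>l. R l j"] by simp
  qed
  have "mmult n R' (mmult n A R) i j - mmult n R' (mmult n (shift_diag A c) R) i j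
      = (\<Sum>k<n. R' i k * (mmult n A R k j - mmult n (shift_diag A c) R k j))"
    unfolding mmult_def[of n R'] by (simp add: sum_subtractf right_diff_distrib)
  also have "\<dots> = (\<Sum>k<n. R' i k * (of_real c * R k j))" by (intro sum.cong refl) (simp add: d)
  also have "\<dots> = of_real c * mmult n R' R i j" by (simp add: mmult_def sum_distrib_left algebra_simps)
  finally show ?thesis using a b by simp
qed

section \<open>The barrier step\<close>

lemma resolvent_traces:
  assumes I: "is_inverse n A R" and I': "is_inverse n (shift_diag A c) R'"
  shows "mtrace n R' - mtrace n R = of_real c * mtrace n (mmult n R' R)"
    and "mtrace n (mmult n R' R') - mtrace n (mmult n R' R)
      = of_real c * mtrace n (mmult n R' (mmult n R R'))"
proof -
  have res: "R' i j - R i j = of_real c * mmult n R' R i j" if "i < n" "j < n" for i j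
    using resolvent_identity[OF I I' that] .
  show "mtrace n R' - mtrace n R = of_real c * mtrace n (mmult n R' R)"
    unfolding mtrace_def sum_subtractf[symmetric] sum_distrib_left by (intro sum.cong refl) (simp add: res)
  have "mtrace n (mmult n R' R') - mtrace n (mmult n R' R) = (\<Sum>i<n. \<Sum>k<n. R' i k * (R' k i - R k i))"
    unfolding mtrace_def mmult_apply by (simp add: sum_subtractf[symmetric] right_diff_distrib)
  also have "\<dots> = (\<Sum>i<n. \<Sum>k<n. R' i k * (of_real c * mmult n R' R k i))"
    by (intro sum.cong refl) (simp add: res)
  also have "\<dots> = of_real c * mtrace n (mmult n R' (mmult n R' R))"
    unfolding mtrace_def mmult_apply[of n R' "mmult n R' R"] by (simp add: sum_distrib_left algebra_simps)
  also have "mtrace n (mmult n R' (mmult n R' R)) = mtrace n (mmult n R' (mmult n R R'))"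
    by (simp add: mtrace_mmult_commute[of n R' "mmult n R' R"] mmult_assoc)
  finally show "mtrace n (mmult n R' R') - mtrace n (mmult n R' R)
      = of_real c * mtrace n (mmult n R' (mmult n R R'))" .
qed

text \<open>Here \<open>a = tr R'\<close>, \<open>b = tr R\<close>, \<open>p = tr (R' R)\<close> and \<open>T = tr R'\<^sup>2\<close> for \<open>R' = (A - I/4)\<^sup>-\<^sup>1\<close>.
  From \<open>p \<le> a b \<le> a\<close> one gets \<open>a \<le> 4/3\<close>, which is what makes the shift \<open>1/4\<close> small enough.\<close>

lemma lower_barrier_arith:
  fixes a b p T :: real
  assumes ab: "a - b = p / 4" and "p \<le> T" "p \<le> a * b" "0 \<le> a" "0 \<le> T" "b \<le> 1"
  shows "(a - b) * (1 + a) \<le> T"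
proof -
  have "a * b \<le> a" using mult_left_mono[OF \<open>b \<le> 1\<close> \<open>0 \<le> a\<close>] by simp
  then have "a \<le> 4/3" using assms by linarith
  have "(a - b) * (1 + a) \<le> (T / 4) * (1 + a)" using assms by (intro mult_right_mono) auto
  also have "\<dots> \<le> (T / 4) * (7 / 3)" using \<open>a \<le> 4/3\<close> \<open>0 \<le> T\<close> by (intro mult_left_mono) auto
  also have "\<dots> \<le> T" using \<open>0 \<le> T\<close> by simp
  finally show ?thesis .
qed

lemma lower_barrier_shift:
  assumes P: "pos_def n A" and I: "is_inverse n A R" and t: "Re (mtrace n R) \<le> 1"
    and I': "is_inverse n (shift_diag A (1/4)) R'"
  shows "(Re (mtrace n R') - Re (mtrace n R)) * (1 + Re (mtrace n R')) \<le> Re (mtrace n (mmult n R' R'))"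
proof (rule lower_barrier_arith)
  have P': "pos_def n (shift_diag A (1/4))"
    by (rule pos_def_shift_diag_if_trace_inverse_le_1[OF P I t]) simp
  have H': "hermitian n R'" by (rule is_inverse_hermitian[OF pos_def_hermitian[OF P'] I'])
  have PR': "pos_semidef n R'" by (rule is_inverse_pos_semidef[OF P' I'])
  have PR: "pos_semidef n R" by (rule is_inverse_pos_semidef[OF P I])
  show "Re (mtrace n R') - Re (mtrace n R) = Re (mtrace n (mmult n R' R)) / 4"
    using arg_cong[OF resolvent_traces(1)[OF I I'], of Re] by simp
  have "0 \<le> Re (mtrace n (mmult n R' (mmult n R R')))"
    by (rule trace_nonneg_of_qform_nonneg) (simp add: qform_sandwich[OF H'] pos_semidefD[OF PR])
  then show "Re (mtrace n (mmult n R' R)) \<le> Re (mtrace n (mmult n R' R'))"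
    using arg_cong[OF resolvent_traces(2)[OF I I'], of Re] by simp
  show "Re (mtrace n (mmult n R' R)) \<le> Re (mtrace n R') * Re (mtrace n R)"
    by (rule pos_semidef_trace_mmult_le[OF PR' PR])
  show "0 \<le> Re (mtrace n R')" by (rule pos_semidef_trace_nonneg[OF PR'])
  show "0 \<le> Re (mtrace n (mmult n R' R'))" by (rule hermitian_trace_square_nonneg[OF H'])
qed (use t in simp)

section \<open>Rank-one updates\<close>

lemma sum_rank_one_expand_right:
  fixes a b r c :: "nat \<Rightarrow> complex"
  shows "(\<Sum>k<n. (a k + p * b k) * (r k - c k * s)) = (\<Sum>k<n. a k * r k) + p * (\<Sum>k<n. b k * r k)
     - (\<Sum>k<n. a k * c k) * s - p * (\<Sum>k<n. b k * c k) * s"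
proof -
  have "(\<Sum>k<n. (a k + p * b k) * (r k - c k * s))
     = (\<Sum>k<n. a k * r k + p * (b k * r k) - (a k * c k) * s - p * (b k * c k) * s)"
    by (intro sum.cong refl) (simp add: algebra_simps)
  then show ?thesis by (simp add: sum.distrib sum_subtractf sum_distrib_left sum_distrib_right)
qed

lemma sum_rank_one_expand_left:
  fixes a b r c :: "nat \<Rightarrow> complex"
  shows "(\<Sum>k<n. (r k - s * c k) * (a k + b k * p)) = (\<Sum>k<n. r k * a k) + (\<Sum>k<n. r k * b k) * p
     - s * (\<Sum>k<n. c k * a k) - s * (\<Sum>k<n. c k * b k) * p"
proof -
  have "(\<Sum>k<n. (r k - s * c k) * (a k + b k * p))
     = (\<Sum>k<n. r k * a k + (r k * b k) * p - s * (c k * a k) - s * (c k * b k) * p)"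
    by (intro sum.cong refl) (simp add: algebra_simps)
  then show ?thesis by (simp add: sum.distrib sum_subtractf sum_distrib_left sum_distrib_right)
qed

lemma rank_one_cancel:
  fixes a b q e :: complex
  assumes "1 + q \<noteq> 0"
  shows "e + a * b - a * (b / (1 + q)) - a * q * (b / (1 + q)) = e"
    and "e + b * a - b / (1 + q) * a - b / (1 + q) * q * a = e"
proof -
  define w where "w = b / (1 + q)"
  have "b = w * (1 + q)" using assms by (simp add: w_def)
  then show "e + a * b - a * (b / (1 + q)) - a * q * (b / (1 + q)) = e"
    and "e + b * a - b / (1 + q) * a - b / (1 + q) * q * a = e"
    unfolding w_def[symmetric] by (simp_all add: algebra_simps)
qed

lemma sherman_morrison_right:
  fixes n :: nat and A R :: cmat and v :: cvec
  defines "y \<equiv> mvec n R v" and "q \<equiv> qform n R v"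
  assumes HR: "hermitian n R" and I: "is_inverse n A R" and d: "1 + q \<noteq> 0"
    and i: "i < n" and j: "j < n"
  shows "mmult n (\<lambda>i j. A i j + v i * cnj (v j)) (\<lambda>i j. R i j - y i * (cnj (y j) / (1 + q))) i j
    = id_mat i j"
proof -
  have AR: "(\<Sum>k<n. A i k * R k j) = id_mat i j"
    using I i j unfolding is_inverse_def mmult_apply by blast
  have "cnj (y j) = (\<Sum>k<n. cnj (R j k) * cnj (v k))" by (simp add: y_def mvec_def)
  also have "\<dots> = (\<Sum>k<n. cnj (v k) * R k j)"
    by (intro sum.cong refl) (simp add: hermitianD[OF HR j])
  finally have vR: "(\<Sum>k<n. cnj (v k) * R k j) = cnj (y j)" by simp
  have Ay: "(\<Sum>k<n. A i k * y k) = v i"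
    using is_inverse_mvec[OF I i, of v] by (simp add: mvec_def y_def)
  have vy: "(\<Sum>k<n. cnj (v k) * y k) = q"
    by (simp add: q_def qform_def cinner_def y_def)
  have "mmult n (\<lambda>i j. A i j + v i * cnj (v j)) (\<lambda>i j. R i j - y i * (cnj (y j) / (1 + q))) i j
      = id_mat i j + v i * cnj (y j) - v i * (cnj (y j) / (1 + q)) - v i * q * (cnj (y j) / (1 + q))"
    unfolding mmult_apply sum_rank_one_expand_right AR vR Ay vy ..
  also have "\<dots> = id_mat i j" using rank_one_cancel(1)[OF d] .
  finally show ?thesis .
qed

lemma sherman_morrison_left:
  fixes n :: nat and A R :: cmat and v :: cvec
  defines "y \<equiv> mvec n R v" and "q \<equiv> qform n R v"
  assumes H: "hermitian n A" and HR: "hermitian n R" and I: "is_inverse n A R" and d: "1 + q \<noteq> 0"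
    and i: "i < n" and j: "j < n"
  shows "mmult n (\<lambda>i j. R i j - y i * (cnj (y j) / (1 + q))) (\<lambda>i j. A i j + v i * cnj (v j)) i j
    = id_mat i j"
proof -
  have RA: "(\<Sum>k<n. R i k * A k j) = id_mat i j"
    using I i j unfolding is_inverse_def mmult_apply by blast
  have Rv: "(\<Sum>k<n. R i k * v k) = y i" by (simp add: y_def mvec_def)
  have Ay: "(\<Sum>k<n. A j k * y k) = v j"
    using is_inverse_mvec[OF I j, of v] by (simp add: mvec_def y_def)
  have "cnj (v j) = (\<Sum>k<n. cnj (A j k) * cnj (y k))" by (simp flip: Ay)
  also have "\<dots> = (\<Sum>k<n. cnj (y k) * A k j)"
    by (intro sum.cong refl) (simp add: hermitianD[OF H j])
  finally have yA: "(\<Sum>k<n. cnj (y k) * A k j) = cnj (v j)" by simp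
  have "cnj q = q" unfolding q_def by (metis hermitian_qform_real[OF HR] complex_cnj_complex_of_real)
  then have yv: "(\<Sum>k<n. cnj (y k) * v k) = q"
    using cinner_commute[of n y v] by (simp add: cinner_def q_def qform_def y_def)
  have "mmult n (\<lambda>i j. R i j - y i * (cnj (y j) / (1 + q))) (\<lambda>i j. A i j + v i * cnj (v j)) i j
      = (\<Sum>k<n. (R i k - (y i / (1 + q)) * cnj (y k)) * (A k j + v k * cnj (v j)))"
    by (simp add: mmult_apply field_simps)
  also have "\<dots> = id_mat i j + y i * cnj (v j) - (y i / (1 + q)) * cnj (v j)
      - (y i / (1 + q)) * q * cnj (v j)"
    unfolding sum_rank_one_expand_left RA Rv yA yv ..
  also have "\<dots> = id_mat i j" using rank_one_cancel(2)[OF d] .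
  finally show ?thesis .
qed

lemma sherman_morrison:
  fixes n :: nat and A R :: cmat and v :: cvec
  defines "y \<equiv> mvec n R v"
  assumes H: "hermitian n A" and I: "is_inverse n A R" and d: "1 + qform n R v \<noteq> 0"
  shows "is_inverse n (\<lambda>i j. A i j + v i * cnj (v j))
           (\<lambda>i j. R i j - y i * (cnj (y j) / (1 + qform n R v)))"
  unfolding is_inverse_def y_def
  using sherman_morrison_right[OF is_inverse_hermitian[OF H I] I d]
    sherman_morrison_left[OF H is_inverse_hermitian[OF H I] I d] by blast

lemma pos_def_add_rank_one:
  assumes P: "pos_def n A"
  shows "pos_def n (\<lambda>i j. A i j + v i * cnj (v j))"
  unfolding pos_def_def
proof (intro conjI allI impI)
  show "hermitian n (\<lambda>i j. A i j + v i * cnj (v j))"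
    unfolding hermitian_def
  proof (intro allI impI)
    fix i j assume "i < n" "j < n"
    then have "A j i = cnj (A i j)" by (rule hermitianD[OF pos_def_hermitian[OF P]])
    then show "A j i + v j * cnj (v i) = cnj (A i j + v i * cnj (v j))" by simp
  qed
  fix x :: cvec assume x: "\<exists>i<n. x i \<noteq> 0"
  have mv: "mvec n (\<lambda>i j. A i j + v i * cnj (v j)) x = (\<lambda>i. mvec n A x i + cinner n v x * v i)"
  proof
    fix i
    have "mvec n (\<lambda>i j. A i j + v i * cnj (v j)) x i = (\<Sum>j<n. A i j * x j + v i * (cnj (v j) * x j))"
      by (simp add: mvec_def distrib_right mult.assoc)
    also have "\<dots> = mvec n A x i + cinner n v x * v i"
      by (simp add: mvec_def cinner_def sum.distrib sum_distrib_left mult.commute)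
    finally show "mvec n (\<lambda>i j. A i j + v i * cnj (v j)) x i = mvec n A x i + cinner n v x * v i" .
  qed
  have "qform n (\<lambda>i j. A i j + v i * cnj (v j)) x = qform n A x + cinner n v x * cinner n x v"
    unfolding qform_def mv cinner_add_right ..
  also have "cinner n x v = cnj (cinner n v x)" by (rule cinner_commute)
  finally have "Re (qform n (\<lambda>i j. A i j + v i * cnj (v j)) x) = Re (qform n A x) + (cmod (cinner n v x))\<^sup>2"
    by (simp add: complex_norm_square[symmetric] del: of_real_power)
  with pos_defD[OF P x] show "0 < Re (qform n (\<lambda>i j. A i j + v i * cnj (v j)) x)"
    by (simp add: add_pos_nonneg)
qed

lemma trace_rank_one_update:
  assumes P: "pos_def n A" and I: "is_inverse n A R"
    and le: "(Re (mtrace n R) - c) * (1 + Re (qform n R v)) \<le> Re (qform n (mmult n R R) v)"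
  obtains R' where "is_inverse n (\<lambda>i j. A i j + v i * cnj (v j)) R'" and "Re (mtrace n R') \<le> c"
proof -
  have H: "hermitian n A" by (rule pos_def_hermitian[OF P])
  have PR: "pos_semidef n R" by (rule is_inverse_pos_semidef[OF P I])
  define y where "y = mvec n R v"
  define d where "d = 1 + Re (qform n R v)"
  have d_pos: "0 < d" using pos_semidefD[OF PR] by (simp add: d_def add_pos_nonneg)
  have d_eq: "1 + qform n R v = of_real d"
    using hermitian_qform_real[OF pos_semidef_hermitian[OF PR]] by (simp add: d_def)
  have inv: "is_inverse n (\<lambda>i j. A i j + v i * cnj (v j)) (\<lambda>i j. R i j - y i * (cnj (y j) / of_real d))"
    using sherman_morrison[OF H I, of v] d_pos unfolding d_eq y_def by simp
  have "qform n (mmult n R R) v = cinner n (mvec n R v) (mvec n R v)"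
    unfolding qform_def mvec_mmult by (rule hermitian_adjoint[OF pos_semidef_hermitian[OF PR]])
  then have RR: "Re (qform n (mmult n R R) v) = sqnorm n y" by (simp add: cinner_self y_def)
  have "mtrace n (\<lambda>i j. R i j - y i * (cnj (y j) / of_real d)) = mtrace n R - cinner n y y / of_real d"
    by (simp add: mtrace_def cinner_def sum_subtractf sum_divide_distrib mult.commute)
  then have "Re (mtrace n (\<lambda>i j. R i j - y i * (cnj (y j) / of_real d))) = Re (mtrace n R) - sqnorm n y / d"
    by (simp add: cinner_self)
  also have "\<dots> \<le> c"
    using le d_pos unfolding RR d_def[symmetric] by (simp add: field_simps)
  finally show ?thesis using inv that by blast
qed

section \<open>Choosing the sample points\<close>

text \<open>\<open>A\<close> stands for the shifted matrix \<open>A\<^sub>k - l I\<close>, whose inverse has trace equal to the lower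
  potential of Batson--Spielman--Srivastava.\<close>

definition lower_potential_le_1 :: "nat \<Rightarrow> cmat \<Rightarrow> bool" where
  "lower_potential_le_1 n A \<longleftrightarrow> pos_def n A \<and> (\<exists>R. is_inverse n A R \<and> Re (mtrace n R) \<le> 1)"

lemma lower_potential_le_1_scaled_id:
  assumes "0 < n"
  shows "lower_potential_le_1 n (\<lambda>i j. of_nat n * id_mat i j)"
proof -
  have "pos_def n (\<lambda>i j. of_nat n * id_mat i j)"
    unfolding pos_def_def
  proof (intro conjI allI impI)
    show "hermitian n (\<lambda>i j. of_nat n * id_mat i j)" by (simp add: hermitian_def id_mat_def)
    fix x :: cvec assume x: "\<exists>i<n. x i \<noteq> 0"
    have "qform n (\<lambda>i j. of_nat n * id_mat i j) x = cinner n x (\<lambda>i. of_nat n * x i)"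
      unfolding qform_def mvec_def
      by (intro cinner_cong) (simp_all add: mult.assoc sum_id_mat_right flip: sum_distrib_left)
    also have "\<dots> = of_nat n * of_real (sqnorm n x)"
      by (simp add: cinner_def sum_distrib_left mult_ac flip: cinner_self)
    finally show "0 < Re (qform n (\<lambda>i j. of_nat n * id_mat i j) x)"
      using assms sqnorm_pos[OF x] by simp
  qed
  moreover have "is_inverse n (\<lambda>i j. of_nat n * id_mat i j) (\<lambda>i j. of_real (1 / real n) * id_mat i j)"
    using assms by (simp add: is_inverse_def mmult_apply sum_distrib_left mult_ac sum_id_mat_right)
  moreover have "Re (mtrace n (\<lambda>i j. of_real (1 / real n) * id_mat i j)) = 1"
    using assms by (simp add: mtrace_def id_mat_def)
  ultimately show ?thesis unfolding lower_potential_le_1_def by auto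
qed

definition sample_gram :: "(nat \<Rightarrow> 'a \<Rightarrow> complex) \<Rightarrow> (nat \<Rightarrow> 'a) \<Rightarrow> nat \<Rightarrow> cmat" where
  "sample_gram u \<xi> k = (\<lambda>i j. \<Sum>p<k. u i (\<xi> p) * cnj (u j (\<xi> p)))"

lemma qform_sample_gram:
  "qform n (sample_gram u \<xi> k) x = (\<Sum>p<k. of_real ((cmod (cinner n x (\<lambda>i. u i (\<xi> p))))\<^sup>2))"
proof -
  have "qform n (sample_gram u \<xi> k) x
      = (\<Sum>i<n. \<Sum>j<n. \<Sum>p<k. (cnj (x i) * u i (\<xi> p)) * (x j * cnj (u j (\<xi> p))))"
    by (simp add: qform_def cinner_def mvec_def sample_gram_def sum_distrib_left sum_distrib_right mult_ac)
  also have "\<dots> = (\<Sum>i<n. \<Sum>p<k. \<Sum>j<n. (cnj (x i) * u i (\<xi> p)) * (x j * cnj (u j (\<xi> p))))"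
    by (rule sum.cong[OF refl]) (rule sum.swap)
  also have "\<dots> = (\<Sum>p<k. \<Sum>i<n. \<Sum>j<n. (cnj (x i) * u i (\<xi> p)) * (x j * cnj (u j (\<xi> p))))"
    by (rule sum.swap)
  also have "\<dots> = (\<Sum>p<k. cinner n x (\<lambda>i. u i (\<xi> p)) * cnj (cinner n x (\<lambda>i. u i (\<xi> p))))"
    by (simp add: cinner_def sum_product)
  also have "\<dots> = (\<Sum>p<k. of_real ((cmod (cinner n x (\<lambda>i. u i (\<xi> p))))\<^sup>2))"
    by (simp only: complex_norm_square)
  finally show ?thesis .
qed

locale orthonormal_system = prob_space \<mu>
  for \<mu> :: "'a::topological_space measure" +
  fixes \<Omega> :: "'a set" and u :: "nat \<Rightarrow> 'a \<Rightarrow> complex" and n :: nat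
  assumes compact_\<Omega>: "compact \<Omega>"
    and sets_eq: "sets \<mu> = sets (restrict_space borel \<Omega>)"
    and continuous_u: "\<And>i. i < n \<Longrightarrow> continuous_on \<Omega> (u i)"
    and orthonormal: "\<And>i j. i < n \<Longrightarrow> j < n \<Longrightarrow>
       integral\<^sup>L \<mu> (\<lambda>x. u i x * cnj (u j x)) = (if i = j then 1 else 0)"
begin

lemma space_eq: "space \<mu> = \<Omega>"
  using sets_eq_imp_space_eq[OF sets_eq] by (simp add: space_restrict_space)

lemma integrable_continuous:
  fixes h :: "'a \<Rightarrow> 'b::{banach,second_countable_topology}"
  assumes h: "continuous_on \<Omega> h"
  shows "integrable \<mu> h"
proof -
  have borel_eq: "measurable \<mu> borel = measurable (restrict_space borel \<Omega>) borel"
    by (rule measurable_cong_sets[OF sets_eq refl])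
  have "h \<in> borel_measurable \<mu>"
    using borel_measurable_continuous_on_restrict[OF h] unfolding borel_eq .
  moreover obtain B where "\<forall>y\<in>h ` \<Omega>. norm y \<le> B"
    using compact_imp_bounded[OF compact_continuous_image[OF h compact_\<Omega>]] unfolding bounded_iff by blast
  then have "AE x in \<mu>. norm (h x) \<le> B" using space_eq by (intro AE_I2) auto
  ultimately show ?thesis by (intro integrable_const_bound)
qed

lemma exists_point_ge_integral:
  fixes g :: "'a \<Rightarrow> real"
  assumes "continuous_on \<Omega> g" and "0 \<le> integral\<^sup>L \<mu> g"
  shows "\<exists>x\<in>\<Omega>. 0 \<le> g x"
proof (rule ccontr)
  assume "\<not> ?thesis"
  then have "integral\<^sup>L \<mu> g < integral\<^sup>L \<mu> (\<lambda>x. 0)"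
    using integrable_continuous[OF assms(1)] space_eq
    by (intro integral_less_AE_space) (auto simp: emeasure_space_1 not_le intro!: AE_I2)
  with assms(2) show False by simp
qed

lemma qform_at_point: "qform n P (\<lambda>i. u i x) = (\<Sum>i<n. \<Sum>j<n. P i j * (cnj (u i x) * u j x))"
  by (simp add: qform_def cinner_def mvec_def sum_distrib_left mult_ac)

lemma continuous_qform_at_point: "continuous_on \<Omega> (\<lambda>x. qform n P (\<lambda>i. u i x))"
  unfolding qform_at_point by (intro continuous_intros) (auto intro: continuous_u)

lemma integral_qform_at_point: "integral\<^sup>L \<mu> (\<lambda>x. qform n P (\<lambda>i. u i x)) = mtrace n P"
proof -
  have int: "integrable \<mu> (\<lambda>x. P i j * (cnj (u i x) * u j x))" if "i < n" "j < n" for i j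
    using that by (intro integrable_continuous continuous_intros continuous_u)
  have orth': "integral\<^sup>L \<mu> (\<lambda>x. cnj (u i x) * u j x) = id_mat i j" if "i < n" "j < n" for i j
  proof -
    have "integral\<^sup>L \<mu> (\<lambda>x. cnj (u i x) * u j x) = integral\<^sup>L \<mu> (\<lambda>x. cnj (u i x * cnj (u j x)))"
      by simp
    also have "\<dots> = cnj (integral\<^sup>L \<mu> (\<lambda>x. u i x * cnj (u j x)))"
      by (rule Bochner_Integration.integral_cnj)
    finally show ?thesis using orthonormal[OF that] by (simp add: id_mat_def)
  qed
  have "integral\<^sup>L \<mu> (\<lambda>x. qform n P (\<lambda>i. u i x))
      = (\<Sum>i<n. \<Sum>j<n. integral\<^sup>L \<mu> (\<lambda>x. P i j * (cnj (u i x) * u j x)))"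
    unfolding qform_at_point using int
    by (subst Bochner_Integration.integral_sum)
      (auto intro!: Bochner_Integration.integrable_sum sum.cong Bochner_Integration.integral_sum)
  also have "\<dots> = (\<Sum>i<n. \<Sum>j<n. P i j * id_mat i j)"
    by (intro sum.cong refl) (simp add: orth')
  also have "\<dots> = mtrace n P" unfolding mtrace_def by (intro sum.cong refl) (simp add: id_mat_def if_distrib[where f="\<lambda>a. _ * a"] cong: if_cong)
  finally show ?thesis .
qed

lemma exists_point_above_trace:
  assumes "D * (1 + Re (mtrace n R)) \<le> Re (mtrace n (mmult n R R))"
  shows "\<exists>x\<in>\<Omega>. D * (1 + Re (qform n R (\<lambda>i. u i x))) \<le> Re (qform n (mmult n R R) (\<lambda>i. u i x))"
proof -
  let ?g = "\<lambda>x. Re (qform n (mmult n R R) (\<lambda>i. u i x)) - D * (1 + Re (qform n R (\<lambda>i. u i x)))"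
  have int: "integrable \<mu> (\<lambda>x. qform n P (\<lambda>i. u i x))" for P
    by (rule integrable_continuous[OF continuous_qform_at_point])
  have "integral\<^sup>L \<mu> ?g = Re (mtrace n (mmult n R R)) - D * (1 + Re (mtrace n R))"
    using int by (simp add: integral_qform_at_point prob_space)
  moreover have "continuous_on \<Omega> ?g"
    by (intro continuous_intros continuous_on_Re continuous_qform_at_point)
  ultimately show ?thesis using exists_point_ge_integral[of ?g] assms by auto
qed

lemma lower_potential_step:
  assumes "lower_potential_le_1 n A"
  shows "\<exists>x\<in>\<Omega>. lower_potential_le_1 n (\<lambda>i j. shift_diag A (1/4) i j + u i x * cnj (u j x))"
proof -
  obtain R where P: "pos_def n A" and I: "is_inverse n A R" and t: "Re (mtrace n R) \<le> 1"
    using assms unfolding lower_potential_le_1_def by blast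
  have P': "pos_def n (shift_diag A (1/4))"
    by (rule pos_def_shift_diag_if_trace_inverse_le_1[OF P I t]) simp
  obtain R' where I': "is_inverse n (shift_diag A (1/4)) R'" using pos_def_has_inverse[OF P'] .
  obtain x where x: "x \<in> \<Omega>" and le: "(Re (mtrace n R') - Re (mtrace n R)) * (1 + Re (qform n R' (\<lambda>i. u i x)))
      \<le> Re (qform n (mmult n R' R') (\<lambda>i. u i x))"
    using exists_point_above_trace[OF lower_barrier_shift[OF P I t I']] by blast
  obtain R'' where "is_inverse n (\<lambda>i j. shift_diag A (1/4) i j + u i x * cnj (u j x)) R''"
    and "Re (mtrace n R'') \<le> Re (mtrace n R)"
    using trace_rank_one_update[OF P' I' le] .
  with x t pos_def_add_rank_one[OF P'] show ?thesis
    unfolding lower_potential_le_1_def by fastforce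
qed

lemma lower_barrier_points:
  assumes "0 < n"
  shows "\<exists>\<xi>. (\<forall>p<k. \<xi> p \<in> \<Omega>) \<and>
    lower_potential_le_1 n (shift_diag (sample_gram u \<xi> k) (real k / 4 - real n))"
proof (induction k)
  case 0
  have "shift_diag (sample_gram u \<xi> 0) (real 0 / 4 - real n) = (\<lambda>i j. of_nat n * id_mat i j)" for \<xi>
    by (simp add: shift_diag_def sample_gram_def fun_eq_iff)
  then show ?case using lower_potential_le_1_scaled_id[OF assms] by simp
next
  case (Suc k)
  then obtain \<xi> where \<xi>: "\<forall>p<k. \<xi> p \<in> \<Omega>"
    and A: "lower_potential_le_1 n (shift_diag (sample_gram u \<xi> k) (real k / 4 - real n))"
    by blast
  obtain x where "x \<in> \<Omega>" and x: "lower_potential_le_1 n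
      (\<lambda>i j. shift_diag (shift_diag (sample_gram u \<xi> k) (real k / 4 - real n)) (1/4) i j + u i x * cnj (u j x))"
    using lower_potential_step[OF A] by blast
  have step: "shift_diag (sample_gram u (\<xi>(k := x)) (Suc k)) (real (Suc k) / 4 - real n)
      = (\<lambda>i j. shift_diag (shift_diag (sample_gram u \<xi> k) (real k / 4 - real n)) (1/4) i j + u i x * cnj (u j x))"
    by (simp add: fun_eq_iff shift_diag_def sample_gram_def algebra_simps)
  have "\<forall>p<Suc k. (\<xi>(k := x)) p \<in> \<Omega>" using \<xi> \<open>x \<in> \<Omega>\<close> by (simp add: less_Suc_eq)
  with x[folded step] show ?case by blast
qed

lemma lower_sampling_inequality:
  obtains \<xi> where "\<forall>p<8 * n. \<xi> p \<in> \<Omega>"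
    and "\<And>c. real n * sqnorm n c \<le> (\<Sum>p<8 * n. (cmod (\<Sum>i<n. c i * u i (\<xi> p)))\<^sup>2)"
proof (cases "n = 0")
  case False
  then obtain \<xi> where \<xi>: "\<forall>p<8 * n. \<xi> p \<in> \<Omega>"
    and P: "pos_def n (shift_diag (sample_gram u \<xi> (8 * n)) (real n))"
    using lower_barrier_points[of "8 * n"] unfolding lower_potential_le_1_def by auto
  have "real n * sqnorm n c \<le> (\<Sum>p<8 * n. (cmod (\<Sum>i<n. c i * u i (\<xi> p)))\<^sup>2)" for c
  proof -
    let ?x = "\<lambda>i. cnj (c i)"
    have "0 \<le> Re (qform n (shift_diag (sample_gram u \<xi> (8 * n)) (real n)) ?x)"
      by (rule pos_semidefD[OF pos_def_imp_pos_semidef[OF P]])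
    moreover have "cinner n ?x (\<lambda>i. u i (\<xi> p)) = (\<Sum>i<n. c i * u i (\<xi> p))" for p
      by (simp add: cinner_def)
    ultimately show ?thesis
      by (simp add: qform_shift_diag qform_sample_gram sqnorm_def)
  qed
  with \<xi> show ?thesis by (rule that)
qed (rule that[of undefined], simp_all)

end

lemma max_abs_pts_nonneg: "0 \<le> max_abs_pts f \<xi> m"
  unfolding max_abs_pts_def by (rule Max_ge) simp_all

lemma max_abs_pts_ge: "p < m \<Longrightarrow> cmod (f (\<xi> p)) \<le> max_abs_pts f \<xi> m"
  unfolding max_abs_pts_def by (rule Max_ge) simp_all

lemma cmod_sum_mult_squared_le: "(cmod (\<Sum>i<n. c i * z i))\<^sup>2 \<le> sqnorm n c * sqnorm n z"
proof -
  have "cmod (\<Sum>i<n. c i * z i) \<le> (\<Sum>i<n. cmod (c i) * cmod (z i))"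
    by (metis (no_types, lifting) norm_mult norm_sum sum.cong)
  then have "(cmod (\<Sum>i<n. c i * z i))\<^sup>2 \<le> (\<Sum>i<n. cmod (c i) * cmod (z i))\<^sup>2"
    by (simp add: power_mono)
  also have "\<dots> \<le> sqnorm n c * sqnorm n z"
    unfolding sqnorm_def by (rule Cauchy_Schwarz_ineq_sum)
  finally show ?thesis .
qed

lemma sqnorm_le_of_sampling:
  assumes samp: "real n * sqnorm n c \<le> (\<Sum>p<m. (cmod (g p))\<^sup>2)"
    and g: "\<forall>p<m. cmod (g p) \<le> M" and m: "real m \<le> K * real n" and "0 \<le> K"
  shows "sqnorm n c \<le> K * M\<^sup>2"
proof (cases "n = 0")
  case False
  have "(\<Sum>p<m. (cmod (g p))\<^sup>2) \<le> (\<Sum>p<m. M\<^sup>2)"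
    using g by (intro sum_mono power_mono) auto
  also have "\<dots> \<le> real n * (K * M\<^sup>2)"
    using mult_right_mono[OF m, of "M\<^sup>2"] by (simp add: mult_ac)
  finally have "real n * sqnorm n c \<le> real n * (K * M\<^sup>2)" using samp by linarith
  then show ?thesis using False by (simp add: mult_le_cancel_left_pos)
qed (simp add: sqnorm_def \<open>0 \<le> K\<close>)

lemma SUP_le_mult_SUP:
  fixes g w :: "'a \<Rightarrow> real"
  assumes "A \<noteq> {}" "bdd_above (w ` A)" "0 \<le> C" "\<And>x. x \<in> A \<Longrightarrow> g x \<le> C * w x"
  shows "(SUP x\<in>A. g x) \<le> C * (SUP x\<in>A. w x)"
proof (rule cSUP_least[OF assms(1)])
  fix x assume "x \<in> A"
  then have "C * w x \<le> C * (SUP x\<in>A. w x)"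
    using assms(2,3) by (intro mult_left_mono cSUP_upper) auto
  with assms(4)[OF \<open>x \<in> A\<close>] show "g x \<le> C * (SUP x\<in>A. w x)" by linarith
qed

context orthonormal_system
begin

lemma weighted_sampling_bound:
  obtains \<xi> where "\<forall>p<8 * n. \<xi> p \<in> \<Omega>"
    and "\<And>f c x. \<forall>y\<in>\<Omega>. f y = (\<Sum>i<n. c i * u i y) \<Longrightarrow> x \<in> \<Omega> \<Longrightarrow>
      cmod (f x) \<le> 3 * max_abs_pts f \<xi> (8 * n) * sqrt (sqnorm n (\<lambda>i. u i x))"
proof -
  obtain \<xi> where \<xi>: "\<forall>p<8 * n. \<xi> p \<in> \<Omega>"
    and samp: "\<And>c. real n * sqnorm n c \<le> (\<Sum>p<8 * n. (cmod (\<Sum>i<n. c i * u i (\<xi> p)))\<^sup>2)"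
    using lower_sampling_inequality by blast
  have "cmod (f x) \<le> 3 * max_abs_pts f \<xi> (8 * n) * sqrt (sqnorm n (\<lambda>i. u i x))"
    if f: "\<forall>y\<in>\<Omega>. f y = (\<Sum>i<n. c i * u i y)" and "x \<in> \<Omega>" for f c x
  proof -
    let ?M = "max_abs_pts f \<xi> (8 * n)"
    have "sqnorm n c \<le> 8 * ?M\<^sup>2"
      using samp[of c] f \<xi> max_abs_pts_ge[of _ "8 * n" f \<xi>]
      by (intro sqnorm_le_of_sampling[where g = "\<lambda>p. f (\<xi> p)" and m = "8 * n"]) auto
    have "(cmod (f x))\<^sup>2 \<le> sqnorm n c * sqnorm n (\<lambda>i. u i x)"
      using cmod_sum_mult_squared_le[of c "\<lambda>i. u i x" n] f \<open>x \<in> \<Omega>\<close> by simp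
    also have "\<dots> \<le> 9 * ?M\<^sup>2 * sqnorm n (\<lambda>i. u i x)"
      using \<open>sqnorm n c \<le> 8 * ?M\<^sup>2\<close> zero_le_power2[of ?M]
      by (intro mult_right_mono) (linarith, simp add: sqnorm_nonneg)
    also have "\<dots> = (3 * ?M * sqrt (sqnorm n (\<lambda>i. u i x)))\<^sup>2"
      by (simp add: power_mult_distrib sqnorm_nonneg)
    finally show ?thesis
      by (rule power2_le_imp_le) (simp add: max_abs_pts_nonneg sqnorm_nonneg)
  qed
  with \<xi> show ?thesis by (rule that)
qed

lemma \<Omega>_nonempty: "\<Omega> \<noteq> {}"
  using not_empty space_eq by simp

lemma bdd_above_weight: "bdd_above ((\<lambda>x. sqrt (sqnorm n (\<lambda>i. u i x))) ` \<Omega>)"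
  unfolding sqnorm_def
  by (intro bounded_imp_bdd_above compact_imp_bounded compact_continuous_image compact_\<Omega> continuous_intros)
    (auto intro: continuous_u)

end

theorem theorem2p3:
  "\<exists>C1 C2 :: real. C1 > 0 \<and> C2 > 0 \<and>
   (\<forall>(d::nat) (\<Omega>::(nat \<Rightarrow> real) set) (\<mu>::(nat \<Rightarrow> real) measure)
      (X::((nat \<Rightarrow> real) \<Rightarrow> complex) set) (N::nat) (u::nat \<Rightarrow> (nat \<Rightarrow> real) \<Rightarrow> complex).
     \<Omega> \<subseteq> euclid_pts d \<and> compact \<Omega> \<and>
     prob_space \<mu> \<and> sets \<mu> = sets (restrict_space borel \<Omega>) \<and>
     complex_fun_subspace X \<and> (\<forall>f\<in>X. continuous_on \<Omega> f) \<and>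
     (\<forall>i<N. u i \<in> X) \<and>
     (\<forall>i<N. \<forall>j<N. integral\<^sup>L \<mu> (\<lambda>x. u i x * cnj (u j x)) = (if i = j then 1 else 0)) \<and>
     (\<forall>f\<in>X. \<exists>c::nat \<Rightarrow> complex. \<forall>x\<in>\<Omega>. f x = (\<Sum>i<N. c i * u i x))
     \<longrightarrow>
     (let w = (\<lambda>x. sqrt (\<Sum>i<N. (cmod (u i x))\<^sup>2)) in
      \<exists>(m::nat) (\<xi>::nat \<Rightarrow> (nat \<Rightarrow> real)).
        real m \<le> C1 * real N \<and> (\<forall>j<m. \<xi> j \<in> \<Omega>) \<and>
        (\<forall>f\<in>X.
           (\<forall>x\<in>\<Omega>. w x > 0 \<longrightarrow> cmod (f x) / w x \<le> C2 * max_abs_pts f \<xi> m) \<and>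
           (SUP x\<in>\<Omega>. cmod (f x)) \<le> C2 * (SUP x\<in>\<Omega>. w x) * max_abs_pts f \<xi> m)))"
proof (rule exI[of _ "8::real"], rule exI[of _ "3::real"], intro conjI allI impI, goal_cases)
  case (3 d \<Omega> \<mu> X N u)
  then interpret orthonormal_system \<mu> \<Omega> u N
    by (auto simp: orthonormal_system_def orthonormal_system_axioms_def)
  obtain \<xi> where \<xi>: "\<forall>p<8 * N. \<xi> p \<in> \<Omega>" and bound: "\<And>f c x. \<forall>y\<in>\<Omega>. f y = (\<Sum>i<N. c i * u i y) \<Longrightarrow>
      x \<in> \<Omega> \<Longrightarrow> cmod (f x) \<le> 3 * max_abs_pts f \<xi> (8 * N) * sqrt (sqnorm N (\<lambda>i. u i x))"
    using weighted_sampling_bound by blast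
  define w where "w x = sqrt (sqnorm N (\<lambda>i. u i x))" for x
  have bound_X: "cmod (f x) \<le> 3 * max_abs_pts f \<xi> (8 * N) * w x" if "f \<in> X" "x \<in> \<Omega>" for f x
  proof -
    obtain c where "\<forall>y\<in>\<Omega>. f y = (\<Sum>i<N. c i * u i y)" using 3 \<open>f \<in> X\<close> by blast
    then show ?thesis unfolding w_def using \<open>x \<in> \<Omega>\<close> by (rule bound)
  qed
  have "(SUP x\<in>\<Omega>. cmod (f x)) \<le> 3 * max_abs_pts f \<xi> (8 * N) * (SUP x\<in>\<Omega>. w x)" if "f \<in> X" for f
    using \<Omega>_nonempty bdd_above_weight bound_X[OF that] max_abs_pts_nonneg unfolding w_def
    by (intro SUP_le_mult_SUP) auto
  moreover have "cmod (f x) / w x \<le> 3 * max_abs_pts f \<xi> (8 * N)" if "f \<in> X" "x \<in> \<Omega>" "0 < w x" for f x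
    using bound_X[OF that(1,2)] that(3) by (simp add: pos_divide_le_eq)
  ultimately show ?case
    using \<xi> unfolding Let_def sqnorm_def[symmetric] w_def[symmetric]
    by (intro exI[of _ "8 * N"] exI[of _ \<xi>]) (auto simp: mult_ac)
qed simp_all

end
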